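(* Let $T$ be a monad on $\mathsf{Set}$, let $X,Y$ be sets, let $\mu\in T(X)$ have formal presentation $(\Gamma,\langle x_i\rangle_{i\in[n]})$ with $\Gamma\in T([n])$, and let $f:X\to T(Y)$. For each $i\in[n]$ let $(\Delta_i,\langle y_{i,j}\rangle_{j\in[m_i]})$, with $\Delta_i\in T([m_i])$, be a formal presentation of $f(x_i)$. Then $\mu\mathrel{>\!\!>=} f$ has the formal presentation $(\Xi,\langle y_{i,j}\rangle_{i\in[n],\,j\in[m_i]})$, where $\Xi\in T([l])$, $l=\sum_{i\in[n]}m_i$, is the sequential composition of $\Gamma$ with the family $(\Delta_i)_{i\in[n]}$.
   Context: $[n]=\{1,\dots,n\}$ for $n\in\mathbb{N}$, $[\omega]=\mathbb{N}$; $\mathbb{N}\cup\{\omega\}$ indexes these sets and $[l]$ is identified (via a fixed bijection) with the disjoint union $\coprod_{i\in[n]}[m_i]$, so that sequences indexed by pairs $(i,j)$ with $j\in[m_i]$ are sequences indexed by $[l]$. For $\mu\in T(X)$ and $f:X\to T(Y)$, $\mu\mathrel{>\!\!>=} f$ is the Kleisli extension of $f$ applied to $\mu$. A formal presentation of $\mu\in T(X)$ is a pair $(\Gamma,x)$ with $\Gamma\in T([n])$ and $x:[n]\to X$ (a sequence $\langle x_i\rangle$) such that $\mu=T(x)(\Gamma)$. An $n$-ary algebraic operation is a family $\gamma_X:T(X)^n\to T(X)$ with $\gamma_X(\mu_1,\dots)\mathrel{>\!\!>=} f=\gamma_Y(\mu_1\mathrel{>\!\!>=} f,\dots)$ for all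 $f:X\to T(Y)$; generic effects $\Gamma\in T([n])$ correspond bijectively to $n$-ary algebraic operations via $\gamma_X(\mu_1,\dots,\mu_i,\dots)=\Gamma\mathrel{>\!\!>=}(i\mapsto\mu_i)$ and $\Gamma=\gamma_{[n]}(\eta(1),\dots,\eta(i),\dots)$. The sequential composition of $\Gamma\in T([n])$ (with operation $\gamma$) and $\Delta_i\in T([m_i])$ (with operations $\delta_i$) is the generic effect in $T([l])$ corresponding to the $l$-ary algebraic operation $T(Z)^{l}\cong\prod_{i\in[n]}T(Z)^{m_i}\xrightarrow{\langle\delta_i\rangle_i}T(Z)^n\xrightarrow{\gamma}T(Z)$. *)

theory Defs
  imports Main "HOL-Library.Extended_Nat" "HOL-Library.FuncSet"
begin

text \<open>A monad on Set, given as a Kleisli triple on all subsets of a universe type 'u.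
  T X is the carrier of T(X) inside a value type 't, eta X is the unit at X,
  bind X Y mu f is mu >>= f for mu in T(X), f : X -> T(Y).  Functions are only
  relevant on their domain X (extensionality law).\<close>

definition kleisli_monad ::
  "('u set \<Rightarrow> 't set) \<Rightarrow> ('u set \<Rightarrow> 'u \<Rightarrow> 't)
    \<Rightarrow> ('u set \<Rightarrow> 'u set \<Rightarrow> 't \<Rightarrow> ('u \<Rightarrow> 't) \<Rightarrow> 't) \<Rightarrow> bool" where
  "kleisli_monad T eta bind \<longleftrightarrow>
     (\<forall>X x. x \<in> X \<longrightarrow> eta X x \<in> T X) \<and>
     (\<forall>X Y mu f. mu \<in> T X \<longrightarrow> f \<in> X \<rightarrow> T Y \<longrightarrow> bind X Y mu f \<in> T Y) \<and>
     (\<forall>X Y mu f g. mu \<in> T X \<longrightarrow> (\<forall>x\<in>X. f x = g x) \<longrightarrow> bind X Y mu f = bind X Y mu g) \<and>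
     (\<forall>X Y x f. x \<in> X \<longrightarrow> f \<in> X \<rightarrow> T Y \<longrightarrow> bind X Y (eta X x) f = f x) \<and>
     (\<forall>X mu. mu \<in> T X \<longrightarrow> bind X X mu (eta X) = mu) \<and>
     (\<forall>X Y Z mu f g. mu \<in> T X \<longrightarrow> f \<in> X \<rightarrow> T Y \<longrightarrow> g \<in> Y \<rightarrow> T Z \<longrightarrow>
        bind Y Z (bind X Y mu f) g = bind X Z mu (\<lambda>x. bind Y Z (f x) g))"

text \<open>[n] = {1..n} for n in N, and [omega] = N (= {1,2,...}).\<close>
definition idx :: "enat \<Rightarrow> nat set" where
  "idx n = {k. 1 \<le> k \<and> enat k \<le> n}"

text \<open>The universe is 'a + nat: user sets X are Inl ` X, index sets [n] are Inr ` [n].\<close>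
definition uidx :: "enat \<Rightarrow> ('a + nat) set" where
  "uidx n = Inr ` idx n"

definition tmap ::
  "(('a + nat) set \<Rightarrow> ('a + nat) \<Rightarrow> 't)
    \<Rightarrow> (('a + nat) set \<Rightarrow> ('a + nat) set \<Rightarrow> 't \<Rightarrow> (('a + nat) \<Rightarrow> 't) \<Rightarrow> 't)
    \<Rightarrow> enat \<Rightarrow> 'a set \<Rightarrow> (nat \<Rightarrow> 'a) \<Rightarrow> 't \<Rightarrow> 't" where
  "tmap eta bind n X x Gamma = bind (uidx n) (Inl ` X) Gamma (\<lambda>k. eta (Inl ` X) (Inl (x (projr k))))"

definition formal_presentation ::
  "(('a + nat) set \<Rightarrow> 't set) \<Rightarrow> (('a + nat) set \<Rightarrow> ('a + nat) \<Rightarrow> 't)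
    \<Rightarrow> (('a + nat) set \<Rightarrow> ('a + nat) set \<Rightarrow> 't \<Rightarrow> (('a + nat) \<Rightarrow> 't) \<Rightarrow> 't)
    \<Rightarrow> 'a set \<Rightarrow> 't \<Rightarrow> enat \<Rightarrow> 't \<Rightarrow> (nat \<Rightarrow> 'a) \<Rightarrow> bool" where
  "formal_presentation T eta bind X mu n Gamma x \<longleftrightarrow>
     Gamma \<in> T (uidx n) \<and> (\<forall>i\<in>idx n. x i \<in> X) \<and> mu = tmap eta bind n X x Gamma"

text \<open>The n-ary algebraic operation gamma_Z corresponding to a generic effect Gamma in T([n]).\<close>
definition alg_op ::
  "(('a + nat) set \<Rightarrow> ('a + nat) set \<Rightarrow> 't \<Rightarrow> (('a + nat) \<Rightarrow> 't) \<Rightarrow> 't)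
    \<Rightarrow> enat \<Rightarrow> 't \<Rightarrow> ('a + nat) set \<Rightarrow> (nat \<Rightarrow> 't) \<Rightarrow> 't" where
  "alg_op bind n Gamma Z nu = bind (uidx n) Z Gamma (\<lambda>k. nu (projr k))"

definition gen_of_op ::
  "(('a + nat) set \<Rightarrow> ('a + nat) \<Rightarrow> 't) \<Rightarrow> enat
    \<Rightarrow> (('a + nat) set \<Rightarrow> (nat \<Rightarrow> 't) \<Rightarrow> 't) \<Rightarrow> 't" where
  "gen_of_op eta n gam = gam (uidx n) (\<lambda>i. eta (uidx n) (Inr i))"

text \<open>Sequential composition of Gamma in T([n]) with Delta_i in T([m_i]), where
  beta : [l] -> coprod_{i in [n]} [m_i] is the fixed identifying bijection.\<close>
definition seq_comp ::
  "(('a + nat) set \<Rightarrow> ('a + nat) \<Rightarrow> 't)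
    \<Rightarrow> (('a + nat) set \<Rightarrow> ('a + nat) set \<Rightarrow> 't \<Rightarrow> (('a + nat) \<Rightarrow> 't) \<Rightarrow> 't)
    \<Rightarrow> enat \<Rightarrow> 't \<Rightarrow> (nat \<Rightarrow> enat) \<Rightarrow> (nat \<Rightarrow> 't) \<Rightarrow> enat \<Rightarrow> (nat \<Rightarrow> nat \<times> nat) \<Rightarrow> 't" where
  "seq_comp eta bind n Gamma m Delta l beta =
     gen_of_op eta l
       (\<lambda>Z rho. alg_op bind n Gamma Z
          (\<lambda>i. alg_op bind (m i) (Delta i) Z (\<lambda>j. rho (inv_into (idx l) beta (i, j)))))"

end

theory Submission
  imports Defs
begin

text \<open>A formal presentation \<open>(\<Gamma>, \<langle>x\<^sub>i\<rangle>)\<close> of \<open>\<mu>\<close> says that \<open>\<mu> = \<gamma>\<^sub>X(\<eta> x\<^sub>1, \<dots>, \<eta> x\<^sub>n)\<close>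
  for the operation \<open>\<gamma>\<close> of \<open>\<Gamma>\<close>. Since \<open>\<gamma>\<close> is algebraic,
  \<open>\<mu> >>= f = \<gamma>\<^sub>Y(f x\<^sub>1, \<dots>, f x\<^sub>n) = \<gamma>\<^sub>Y(\<delta>\<^sub>1(\<eta> y\<^sub>1\<^sub>,\<^sub>j)\<^sub>j, \<dots>, \<delta>\<^sub>n(\<eta> y\<^sub>n\<^sub>,\<^sub>j)\<^sub>j)\<close>,
  and the right-hand side is the operation of the sequential composition \<open>\<Xi>\<close> applied to
  the units \<open>\<eta> y\<^sub>i\<^sub>,\<^sub>j\<close>, because an operation is recovered from its generic effect.\<close>

lemma kleisli_monad_eta_closed:
  assumes "kleisli_monad T eta bind" and "x \<in> X"
  shows "eta X x \<in> T X"
proof -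
  have "\<forall>X x. x \<in> X \<longrightarrow> eta X x \<in> T X"
    using assms(1) unfolding kleisli_monad_def by (elim conjE) assumption
  then show ?thesis using assms(2) by blast
qed

lemma kleisli_monad_bind_closed:
  assumes "kleisli_monad T eta bind" and "mu \<in> T X" and "f \<in> X \<rightarrow> T Y"
  shows "bind X Y mu f \<in> T Y"
proof -
  have "\<forall>X Y mu f. mu \<in> T X \<longrightarrow> f \<in> X \<rightarrow> T Y \<longrightarrow> bind X Y mu f \<in> T Y"
    using assms(1) unfolding kleisli_monad_def by (elim conjE) assumption
  then show ?thesis using assms(2,3) by blast
qed

lemma kleisli_monad_bind_cong:
  assumes "kleisli_monad T eta bind" and "mu \<in> T X" and "\<And>x. x \<in> X \<Longrightarrow> f x = g x"
  shows "bind X Y mu f = bind X Y mu g"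
proof -
  have "\<forall>X Y mu f g. mu \<in> T X \<longrightarrow> (\<forall>x\<in>X. f x = g x) \<longrightarrow> bind X Y mu f = bind X Y mu g"
    using assms(1) unfolding kleisli_monad_def by (elim conjE) assumption
  then show ?thesis using assms(2,3) by blast
qed

lemma kleisli_monad_bind_eta:
  assumes "kleisli_monad T eta bind" and "x \<in> X" and "f \<in> X \<rightarrow> T Y"
  shows "bind X Y (eta X x) f = f x"
proof -
  have "\<forall>X Y x f. x \<in> X \<longrightarrow> f \<in> X \<rightarrow> T Y \<longrightarrow> bind X Y (eta X x) f = f x"
    using assms(1) unfolding kleisli_monad_def by (elim conjE) assumption
  then show ?thesis using assms(2,3) by blast
qed

lemma kleisli_monad_bind_assoc:
  assumes "kleisli_monad T eta bind" and "mu \<in> T X" and "f \<in> X \<rightarrow> T Y" and "g \<in> Y \<rightarrow> T Z"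
  shows "bind Y Z (bind X Y mu f) g = bind X Z mu (\<lambda>x. bind Y Z (f x) g)"
proof -
  have "\<forall>X Y Z mu f g. mu \<in> T X \<longrightarrow> f \<in> X \<rightarrow> T Y \<longrightarrow> g \<in> Y \<rightarrow> T Z \<longrightarrow>
      bind Y Z (bind X Y mu f) g = bind X Z mu (\<lambda>x. bind Y Z (f x) g)"
    using assms(1) unfolding kleisli_monad_def by (elim conjE) assumption
  then show ?thesis using assms(2-4) by blast
qed

lemma tmap_eq_alg_op:
  "tmap eta bind n X x Gamma = alg_op bind n Gamma (Inl ` X) (\<lambda>i. eta (Inl ` X) (Inl (x i)))"
  unfolding tmap_def alg_op_def ..

lemma Inr_in_uidx [simp]: "Inr k \<in> uidx n \<longleftrightarrow> k \<in> idx n"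
  by (auto simp: uidx_def)

lemma alg_op_cong:
  assumes "kleisli_monad T eta bind" and "Gamma \<in> T (uidx n)"
    and "\<And>i. i \<in> idx n \<Longrightarrow> nu i = nu' i"
  shows "alg_op bind n Gamma Z nu = alg_op bind n Gamma Z nu'"
  unfolding alg_op_def using assms(3)
  by (intro kleisli_monad_bind_cong[OF assms(1,2)]) (auto simp: uidx_def)

lemma alg_op_closed:
  assumes "kleisli_monad T eta bind" and "Gamma \<in> T (uidx n)" and "nu \<in> idx n \<rightarrow> T Z"
  shows "alg_op bind n Gamma Z nu \<in> T Z"
  unfolding alg_op_def using assms(3)
  by (intro kleisli_monad_bind_closed[OF assms(1,2)]) (auto simp: uidx_def)

lemma alg_op_bind:
  assumes "kleisli_monad T eta bind" and "Gamma \<in> T (uidx n)"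
    and "nu \<in> idx n \<rightarrow> T Z" and "g \<in> Z \<rightarrow> T W"
  shows "bind Z W (alg_op bind n Gamma Z nu) g = alg_op bind n Gamma W (\<lambda>i. bind Z W (nu i) g)"
proof -
  have "(\<lambda>k. nu (projr k)) \<in> uidx n \<rightarrow> T Z"
    using assms(3) by (auto simp: uidx_def)
  then show ?thesis
    unfolding alg_op_def by (rule kleisli_monad_bind_assoc[OF assms(1,2) _ assms(4)])
qed

lemma bind_formal_presentation:
  assumes monad: "kleisli_monad T eta bind"
    and pres: "formal_presentation T eta bind X mu n Gamma x"
    and f: "f \<in> X \<rightarrow> T (Inl ` Y)"
  shows "bind (Inl ` X) (Inl ` Y) mu (\<lambda>u. f (projl u)) = alg_op bind n Gamma (Inl ` Y) (\<lambda>i. f (x i))"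
proof -
  have Gamma: "Gamma \<in> T (uidx n)" and x: "\<And>i. i \<in> idx n \<Longrightarrow> x i \<in> X"
    and mu: "mu = alg_op bind n Gamma (Inl ` X) (\<lambda>i. eta (Inl ` X) (Inl (x i)))"
    using pres by (auto simp: formal_presentation_def tmap_eq_alg_op)
  have f': "(\<lambda>u. f (projl u)) \<in> Inl ` X \<rightarrow> T (Inl ` Y)"
    using f by auto
  have "bind (Inl ` X) (Inl ` Y) mu (\<lambda>u. f (projl u))
      = alg_op bind n Gamma (Inl ` Y)
          (\<lambda>i. bind (Inl ` X) (Inl ` Y) (eta (Inl ` X) (Inl (x i))) (\<lambda>u. f (projl u)))"
    unfolding mu using monad Gamma x f'
    by (intro alg_op_bind[OF monad]) (auto intro: kleisli_monad_eta_closed[OF monad])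
  also have "\<dots> = alg_op bind n Gamma (Inl ` Y) (\<lambda>i. f (x i))"
  proof (rule alg_op_cong[OF monad Gamma])
    fix i assume "i \<in> idx n"
    then have "Inl (x i) \<in> Inl ` X" using x by blast
    from kleisli_monad_bind_eta[OF monad this f']
    show "bind (Inl ` X) (Inl ` Y) (eta (Inl ` X) (Inl (x i))) (\<lambda>u. f (projl u)) = f (x i)"
      by simp
  qed
  finally show ?thesis .
qed

lemma reindex_in_idx:
  assumes beta: "bij_betw beta (idx l) (SIGMA i:idx n. idx (m i))"
    and "i \<in> idx n" and "j \<in> idx (m i)"
  shows "inv_into (idx l) beta (i, j) \<in> idx l"
    and "beta (inv_into (idx l) beta (i, j)) = (i, j)"
proof -
  have ij: "(i, j) \<in> (SIGMA i:idx n. idx (m i))"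
    using assms(2,3) by blast
  show "inv_into (idx l) beta (i, j) \<in> idx l"
    using beta ij by (metis bij_betw_def inv_into_into)
  show "beta (inv_into (idx l) beta (i, j)) = (i, j)"
    using beta ij by (rule bij_betw_inv_into_right)
qed

lemma seq_comp_closed:
  assumes monad: "kleisli_monad T eta bind" and Gamma: "Gamma \<in> T (uidx n)"
    and Delta: "\<And>i. i \<in> idx n \<Longrightarrow> Delta i \<in> T (uidx (m i))"
    and beta: "bij_betw beta (idx l) (SIGMA i:idx n. idx (m i))"
  shows "seq_comp eta bind n Gamma m Delta l beta \<in> T (uidx l)"
  unfolding seq_comp_def gen_of_op_def
proof (intro alg_op_closed[OF monad Gamma] Pi_I)
  fix i assume i: "i \<in> idx n"
  show "alg_op bind (m i) (Delta i) (uidx l)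
          (\<lambda>j. eta (uidx l) (Inr (inv_into (idx l) beta (i, j)))) \<in> T (uidx l)"
    using reindex_in_idx(1)[OF beta i]
    by (intro alg_op_closed[OF monad Delta[OF i]] Pi_I kleisli_monad_eta_closed[OF monad]) simp
qed

lemma alg_op_seq_comp:
  assumes monad: "kleisli_monad T eta bind" and Gamma: "Gamma \<in> T (uidx n)"
    and Delta: "\<And>i. i \<in> idx n \<Longrightarrow> Delta i \<in> T (uidx (m i))"
    and beta: "bij_betw beta (idx l) (SIGMA i:idx n. idx (m i))"
    and rho: "rho \<in> idx l \<rightarrow> T Z"
  shows "alg_op bind l (seq_comp eta bind n Gamma m Delta l beta) Z rho
       = alg_op bind n Gamma Z (\<lambda>i. alg_op bind (m i) (Delta i) Z (\<lambda>j. rho (inv_into (idx l) beta (i, j))))"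
proof -
  let ?U = "uidx l"
  let ?k = "\<lambda>i j. inv_into (idx l) beta (i, j)"
  let ?rho = "\<lambda>k. rho (projr k)"
  have rho': "?rho \<in> ?U \<rightarrow> T Z"
    using rho by (auto simp: uidx_def)
  have units: "(\<lambda>j. eta ?U (Inr (?k i j))) \<in> idx (m i) \<rightarrow> T ?U" if "i \<in> idx n" for i
    using that beta by (auto intro!: kleisli_monad_eta_closed[OF monad] reindex_in_idx simp: uidx_def)
  have "alg_op bind l (seq_comp eta bind n Gamma m Delta l beta) Z rho
      = bind ?U Z (alg_op bind n Gamma ?U
          (\<lambda>i. alg_op bind (m i) (Delta i) ?U (\<lambda>j. eta ?U (Inr (?k i j))))) ?rho"
    unfolding seq_comp_def gen_of_op_def alg_op_def ..
  also have "\<dots> = alg_op bind n Gamma Z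
      (\<lambda>i. bind ?U Z (alg_op bind (m i) (Delta i) ?U (\<lambda>j. eta ?U (Inr (?k i j)))) ?rho)"
    using monad Gamma Delta units rho' by (intro alg_op_bind[OF monad]) (auto intro: alg_op_closed[OF monad])
  also have "\<dots> = alg_op bind n Gamma Z
      (\<lambda>i. alg_op bind (m i) (Delta i) Z (\<lambda>j. bind ?U Z (eta ?U (Inr (?k i j))) ?rho))"
    using monad Gamma Delta units rho' by (intro alg_op_cong[OF monad] alg_op_bind[OF monad]) auto
  also have "\<dots> = alg_op bind n Gamma Z (\<lambda>i. alg_op bind (m i) (Delta i) Z (\<lambda>j. rho (?k i j)))"
  proof (rule alg_op_cong[OF monad Gamma])
    fix i assume i: "i \<in> idx n"
    show "alg_op bind (m i) (Delta i) Z (\<lambda>j. bind ?U Z (eta ?U (Inr (?k i j))) ?rho)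
        = alg_op bind (m i) (Delta i) Z (\<lambda>j. rho (?k i j))"
    proof (rule alg_op_cong[OF monad Delta[OF i]])
      fix j assume j: "j \<in> idx (m i)"
      have "Inr (?k i j) \<in> ?U"
        using reindex_in_idx(1)[OF beta i j] by simp
      from kleisli_monad_bind_eta[OF monad this rho']
      show "bind ?U Z (eta ?U (Inr (?k i j))) ?rho = rho (?k i j)"
        by simp
    qed
  qed
  finally show ?thesis .
qed

theorem theorem5p10:
  fixes T :: "('a + nat) set \<Rightarrow> 't set"
    and eta :: "('a + nat) set \<Rightarrow> ('a + nat) \<Rightarrow> 't"
    and bind :: "('a + nat) set \<Rightarrow> ('a + nat) set \<Rightarrow> 't \<Rightarrow> (('a + nat) \<Rightarrow> 't) \<Rightarrow> 't"
    and X Y :: "'a set" and mu :: 't and n :: enat and Gamma :: 't and x :: "nat \<Rightarrow> 'a"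
    and f :: "'a \<Rightarrow> 't"
    and m :: "nat \<Rightarrow> enat" and Delta :: "nat \<Rightarrow> 't" and y :: "nat \<Rightarrow> nat \<Rightarrow> 'a"
    and l :: enat and beta :: "nat \<Rightarrow> nat \<times> nat"
  assumes monad: "kleisli_monad T eta bind"
    and mu_pres: "formal_presentation T eta bind X mu n Gamma x"
    and f_map: "f \<in> X \<rightarrow> T (Inl ` Y)"
    and f_pres: "\<forall>i\<in>idx n. formal_presentation T eta bind Y (f (x i)) (m i) (Delta i) (y i)"
    and l_def: "l = (if finite (SIGMA i:idx n. idx (m i))
                     then enat (card (SIGMA i:idx n. idx (m i))) else \<infinity>)"
    and beta: "bij_betw beta (idx l) (SIGMA i:idx n. idx (m i))"
  shows "formal_presentation T eta bind Y
           (bind (Inl ` X) (Inl ` Y) mu (\<lambda>u. f (projl u)))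
           l (seq_comp eta bind n Gamma m Delta l beta)
           (\<lambda>k. y (fst (beta k)) (snd (beta k)))"
proof -
  let ?Y = "Inl ` Y"
  let ?y = "\<lambda>k. y (fst (beta k)) (snd (beta k))"
  have Gamma: "Gamma \<in> T (uidx n)"
    using mu_pres by (simp add: formal_presentation_def)
  have Delta: "\<And>i. i \<in> idx n \<Longrightarrow> Delta i \<in> T (uidx (m i))"
    and y: "\<And>i j. i \<in> idx n \<Longrightarrow> j \<in> idx (m i) \<Longrightarrow> y i j \<in> Y"
    and fx: "\<And>i. i \<in> idx n \<Longrightarrow> f (x i) = alg_op bind (m i) (Delta i) ?Y (\<lambda>j. eta ?Y (Inl (y i j)))"
    using f_pres by (auto simp: formal_presentation_def tmap_eq_alg_op)
  have y_beta: "?y k \<in> Y" if "k \<in> idx l" for k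
    using bij_betw_apply[OF beta that] y by (auto simp: mem_Sigma_iff split: prod.splits)
  have "bind (Inl ` X) ?Y mu (\<lambda>u. f (projl u)) = alg_op bind n Gamma ?Y (\<lambda>i. f (x i))"
    using monad mu_pres f_map by (rule bind_formal_presentation)
  also have "\<dots> = alg_op bind n Gamma ?Y (\<lambda>i. alg_op bind (m i) (Delta i) ?Y
                    (\<lambda>j. eta ?Y (Inl (?y (inv_into (idx l) beta (i, j))))))"
  proof (rule alg_op_cong[OF monad Gamma])
    fix i assume i: "i \<in> idx n"
    show "f (x i) = alg_op bind (m i) (Delta i) ?Y
                      (\<lambda>j. eta ?Y (Inl (?y (inv_into (idx l) beta (i, j)))))"
      unfolding fx[OF i]
      by (rule alg_op_cong[OF monad Delta[OF i]]) (simp add: reindex_in_idx(2)[OF beta i])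
  qed
  also have "\<dots> = alg_op bind l (seq_comp eta bind n Gamma m Delta l beta) ?Y (\<lambda>k. eta ?Y (Inl (?y k)))"
    using monad Gamma Delta beta y_beta
    by (intro alg_op_seq_comp[OF monad, symmetric]) (auto intro: kleisli_monad_eta_closed[OF monad])
  finally have bind_eq: "bind (Inl ` X) ?Y mu (\<lambda>u. f (projl u))
      = alg_op bind l (seq_comp eta bind n Gamma m Delta l beta) ?Y (\<lambda>k. eta ?Y (Inl (?y k)))" .
  have "seq_comp eta bind n Gamma m Delta l beta \<in> T (uidx l)"
    using Gamma Delta beta by (rule seq_comp_closed[OF monad])
  with bind_eq y_beta show ?thesis
    by (simp add: formal_presentation_def tmap_eq_alg_op)
qed

end
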